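(* If $G$ is a connected graph with girth $g\ge 3$ and minimum degree $\delta\ge 3$, then $F_c(G)\ge \delta+g-3$, and this bound is sharp.
   Context: Forcing process: given a set of initially colored vertices, at each step a colored vertex with exactly one non-colored neighbor forces (colors) that neighbor. A set $S\subseteq V(G)$ is a forcing set if iterating this process from $S$ eventually colors all vertices; it is a connected forcing set if moreover the induced subgraph $G[S]$ is connected. $F_c(G)$ is the minimum cardinality of a connected forcing set of $G$. The girth of $G$ is the length of a shortest cycle in $G$. *)

theory Defs
  imports Main "HOL-Library.Extended_Nat"
begin

definition simple_graph :: "'a set \<Rightarrow> 'a set set \<Rightarrow> bool" where
  "simple_graph V E \<longleftrightarrow> finite V \<and>
     (\<forall>e\<in>E. \<exists>u v. u \<in> V \<and> v \<in> V \<and> u \<noteq> v \<and> e = {u, v})"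

definition neighbors :: "'a set \<Rightarrow> 'a set set \<Rightarrow> 'a \<Rightarrow> 'a set" where
  "neighbors V E v = {u \<in> V. {u, v} \<in> E}"

definition degree :: "'a set \<Rightarrow> 'a set set \<Rightarrow> 'a \<Rightarrow> nat" where
  "degree V E v = card (neighbors V E v)"

definition min_degree :: "'a set \<Rightarrow> 'a set set \<Rightarrow> nat" where
  "min_degree V E = Min (degree V E ` V)"

definition connected_on :: "'a set set \<Rightarrow> 'a set \<Rightarrow> bool" where
  "connected_on E S \<longleftrightarrow> S \<noteq> {} \<and>
     (\<forall>u\<in>S. \<forall>v\<in>S. (\<lambda>x y. x \<in> S \<and> y \<in> S \<and> {x, y} \<in> E)\<^sup>*\<^sup>* u v)"

definition connected_graph :: "'a set \<Rightarrow> 'a set set \<Rightarrow> bool" where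
  "connected_graph V E \<longleftrightarrow> connected_on E V"

definition is_cycle :: "'a set \<Rightarrow> 'a set set \<Rightarrow> 'a list \<Rightarrow> bool" where
  "is_cycle V E cs \<longleftrightarrow> 3 \<le> length cs \<and> distinct cs \<and> set cs \<subseteq> V \<and>
     (\<forall>i < length cs. {cs ! i, cs ! ((i + 1) mod length cs)} \<in> E)"

text \<open>Girth: length of a shortest cycle (infinity if acyclic).\<close>
definition girth :: "'a set \<Rightarrow> 'a set set \<Rightarrow> enat" where
  "girth V E = (INF cs \<in> {cs. is_cycle V E cs}. enat (length cs))"

definition force_step :: "'a set \<Rightarrow> 'a set set \<Rightarrow> 'a set \<Rightarrow> 'a set \<Rightarrow> bool" where
  "force_step V E C C' \<longleftrightarrow> (\<exists>u w. u \<in> C \<and> neighbors V E u - C = {w} \<and> C' = insert w C)"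

definition forcing_set :: "'a set \<Rightarrow> 'a set set \<Rightarrow> 'a set \<Rightarrow> bool" where
  "forcing_set V E S \<longleftrightarrow> S \<subseteq> V \<and> (force_step V E)\<^sup>*\<^sup>* S V"

definition connected_forcing_set :: "'a set \<Rightarrow> 'a set set \<Rightarrow> 'a set \<Rightarrow> bool" where
  "connected_forcing_set V E S \<longleftrightarrow> forcing_set V E S \<and> connected_on E S"

definition F_c :: "'a set \<Rightarrow> 'a set set \<Rightarrow> nat" where
  "F_c V E = (LEAST k. \<exists>S. connected_forcing_set V E S \<and> card S = k)"

end

theory Submission
  imports Defs
begin

text \<open>Let S be a connected forcing set other than V. As long as no forced vertex has a second
  colored neighbour, the forced vertices are pendant vertices of the colored subgraph, hanging off
  distinct vertices of S; since every degree is at least 3 this cannot last until all of V is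
  colored. So at some force x \<rightarrow> y the vertex y already has a colored neighbour z \<noteq> x, where
  z lies in S or was forced by some f \<in> S. A shortest path in S from x to z (or f) closes up
  through y to a cycle, so its length j is at least g - 2 (or g - 3). Counting the vertices of
  S by their distance from x, the vertex x and its \<open>\<delta> - 1\<close> neighbours other than y fill distances
  0 and 1, and every distance up to j is attained, whence \<open>|S| \<ge> \<delta> + g - 3\<close>. If the cycle
  through f is a shortest one, the \<open>\<delta> - 1\<close> neighbours of f other than z supply the missing
  vertex; for j \<le> 2 this uses the absence of triangles and 4-cycles. If S = V, removing a vertex
  farthest from a fixed root leaves a smaller connected forcing set. The complete graphs show
  that the bound is attained.\<close>

section \<open>Distances in induced subgraphs\<close>

definition adj_in :: "'a set set \<Rightarrow> 'a set \<Rightarrow> 'a \<Rightarrow> 'a \<Rightarrow> bool" where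
  "adj_in E X = (\<lambda>x y. x \<in> X \<and> y \<in> X \<and> {x, y} \<in> E)"

text \<open>The distance is 0 when b is not reachable from a, so lemmas about it assume reachability.\<close>
definition dist_in :: "'a set set \<Rightarrow> 'a set \<Rightarrow> 'a \<Rightarrow> 'a \<Rightarrow> nat" where
  "dist_in E X a b = (LEAST n. (adj_in E X ^^ n) a b)"

lemma connected_on_adj_in:
  "connected_on E S \<longleftrightarrow> S \<noteq> {} \<and> (\<forall>a\<in>S. \<forall>b\<in>S. (adj_in E S)\<^sup>*\<^sup>* a b)"
  by (simp add: connected_on_def adj_in_def)

lemma symp_adj_in: "symp (adj_in E X)"
  by (auto intro: sympI simp: adj_in_def insert_commute)

lemma adj_in_mono: "X \<subseteq> Y \<Longrightarrow> (adj_in E X ^^ n) a b \<Longrightarrow> (adj_in E Y ^^ n) a b"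
  by (rule relpowp_mono[of "adj_in E X"]) (auto simp: adj_in_def)

lemma rtranclp_adj_in_mem: "(adj_in E X)\<^sup>*\<^sup>* a b \<Longrightarrow> a \<in> X \<Longrightarrow> b \<in> X"
  by (induction rule: rtranclp_induct) (auto simp: adj_in_def)

lemma relpowp_dist_in: "(adj_in E X)\<^sup>*\<^sup>* a b \<Longrightarrow> (adj_in E X ^^ dist_in E X a b) a b"
  unfolding dist_in_def by (rule LeastI_ex) (simp add: rtranclp_power)

lemma dist_in_le: "(adj_in E X ^^ n) a b \<Longrightarrow> dist_in E X a b \<le> n"
  unfolding dist_in_def by (rule Least_le)

lemma dist_in_self: "dist_in E X a a = 0"
  using dist_in_le[of 0 E X a a] by simp

lemma dist_in_eq_0: "(adj_in E X)\<^sup>*\<^sup>* a b \<Longrightarrow> dist_in E X a b = 0 \<Longrightarrow> a = b"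
  using relpowp_dist_in[of E X a b] by auto

lemma dist_in_le_1: "adj_in E X a b \<Longrightarrow> dist_in E X a b \<le> 1"
  using dist_in_le[of 1 E X a b] by (simp only: relpowp_1)

lemma dist_in_le_1_cases:
  "(adj_in E X)\<^sup>*\<^sup>* a b \<Longrightarrow> dist_in E X a b \<le> 1 \<Longrightarrow> a = b \<or> adj_in E X a b"
  using relpowp_dist_in[of E X a b] by (auto simp: le_Suc_eq)

lemma dist_in_le_Suc:
  "(adj_in E X)\<^sup>*\<^sup>* a b \<Longrightarrow> adj_in E X b c \<Longrightarrow> dist_in E X a c \<le> Suc (dist_in E X a b)"
  using relpowp_dist_in[of E X a b] dist_in_le relpowp_Suc_I by fastforce

lemma dist_in_intermediate:
  assumes "(adj_in E X)\<^sup>*\<^sup>* a b" "k \<le> dist_in E X a b"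
  obtains w where "(adj_in E X)\<^sup>*\<^sup>* a w" "dist_in E X a w = k"
proof -
  let ?d = "dist_in E X a b"
  have "(adj_in E X ^^ (k + (?d - k))) a b" using relpowp_dist_in[OF assms(1)] assms(2) by simp
  then obtain w where w1: "(adj_in E X ^^ k) a w" and w2: "(adj_in E X ^^ (?d - k)) w b"
    unfolding relpowp_add by auto
  have "(adj_in E X ^^ (dist_in E X a w + (?d - k))) a b"
    using relpowp_trans[OF relpowp_dist_in[OF relpowp_imp_rtranclp[OF w1]] w2] .
  then have "?d \<le> dist_in E X a w + (?d - k)" by (rule dist_in_le)
  with dist_in_le[OF w1] assms(2) have "dist_in E X a w = k" by linarith
  with relpowp_imp_rtranclp[OF w1] show thesis by (rule that)
qed

section \<open>Walks, cycles and girth\<close>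

fun is_walk :: "'a set set \<Rightarrow> 'a set \<Rightarrow> 'a list \<Rightarrow> bool" where
  "is_walk E X [] \<longleftrightarrow> False"
| "is_walk E X [v] \<longleftrightarrow> v \<in> X"
| "is_walk E X (v # w # vs) \<longleftrightarrow> v \<in> X \<and> {v, w} \<in> E \<and> is_walk E X (w # vs)"

lemma is_walk_append:
  "is_walk E X (xs @ y # zs) \<longleftrightarrow> is_walk E X (xs @ [y]) \<and> is_walk E X (y # zs)"
proof (induction xs)
  case Nil
  then show ?case by (cases zs) auto
next
  case (Cons a xs)
  then show ?case by (cases xs) auto
qed

lemma is_walk_subset: "is_walk E X ps \<Longrightarrow> set ps \<subseteq> X"
  by (induction E X ps rule: is_walk.induct) auto

lemma is_walk_nth_edge: "is_walk E X ps \<Longrightarrow> Suc i < length ps \<Longrightarrow> {ps ! i, ps ! Suc i} \<in> E"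
proof (induction E X ps arbitrary: i rule: is_walk.induct)
  case (3 E X v w vs)
  then show ?case by (cases i) auto
qed auto

lemma is_walk_of_relpowp:
  assumes "(adj_in E X ^^ n) a b" "a \<in> X"
  obtains ps where "is_walk E X ps" "hd ps = a" "last ps = b" "length ps = Suc n"
  using assms
proof (induction n arbitrary: a thesis)
  case 0
  then show ?case by (auto intro: "0.prems"(1)[of "[a]"])
next
  case (Suc n)
  then obtain c where c: "adj_in E X a c" "(adj_in E X ^^ n) c b"
    using relpowp_Suc_D2[of n "adj_in E X" a b] by blast
  then obtain ps where ps: "is_walk E X ps" "hd ps = c" "last ps = b" "length ps = Suc n"
    using Suc.IH by (auto simp: adj_in_def)
  then obtain qs where "ps = c # qs" by (cases ps) auto
  with ps(1) c(1) have "is_walk E X (a # ps)" by (auto simp: adj_in_def)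
  with ps \<open>ps = c # qs\<close> show ?case by (intro Suc.prems(1)[of "a # ps"]) auto
qed

lemma is_walk_distinct:
  assumes "is_walk E X ps"
  obtains qs where "is_walk E X qs" "distinct qs" "hd qs = hd ps" "last qs = last ps"
    "length qs \<le> length ps"
  using assms
proof (induction "length ps" arbitrary: ps rule: less_induct)
  case less
  show ?case
  proof (cases "distinct ps")
    case True
    then show ?thesis using less.prems by blast
  next
    case False
    then obtain xs ys zs y where ps: "ps = xs @ [y] @ ys @ [y] @ zs"
      using not_distinct_decomp by blast
    \<comment> \<open>cut out the closed subwalk between the two occurrences of y\<close>
    have "is_walk E X (xs @ [y])" "is_walk E X ((y # ys) @ y # zs)"
      using less.prems(2) ps is_walk_append[of E X xs y "ys @ y # zs"] by auto
    then have shorter: "is_walk E X (xs @ y # zs)"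
      using is_walk_append[of E X "y # ys" y zs] is_walk_append[of E X xs y zs] by blast
    have "length (xs @ y # zs) < length ps" using ps by simp
    from less.hyps[OF this _ shorter] show ?thesis
      using less.prems(1) ps by (auto simp: hd_append last_append)
  qed
qed

lemma is_cycle_Cons_path:
  assumes "is_walk E X qs" "distinct qs" "X \<subseteq> V" "c \<in> V" "c \<notin> X"
    "hd qs \<noteq> last qs" "{hd qs, c} \<in> E" "{last qs, c} \<in> E"
  shows "is_cycle V E (c # qs)"
proof -
  have "qs \<noteq> []" using assms(1) by auto
  have len: "2 \<le> length qs"
    using assms(6) \<open>qs \<noteq> []\<close> by (cases qs; cases "tl qs") auto
  have "{(c # qs) ! i, (c # qs) ! ((i + 1) mod length (c # qs))} \<in> E"
    if i: "i < length (c # qs)" for i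
  proof (cases i)
    case 0
    then show ?thesis using assms(7) len \<open>qs \<noteq> []\<close> by (simp add: hd_conv_nth insert_commute)
  next
    case (Suc j)
    show ?thesis
    proof (cases "Suc j = length qs")
      case True
      then show ?thesis using assms(8) Suc \<open>qs \<noteq> []\<close> by (simp add: last_conv_nth)
    next
      case False
      then show ?thesis using is_walk_nth_edge[OF assms(1)] Suc i by simp
    qed
  qed
  then show ?thesis
    unfolding is_cycle_def using len assms is_walk_subset[OF assms(1)] by auto
qed

lemma girth_le_length: "girth V E = enat g \<Longrightarrow> is_cycle V E cs \<Longrightarrow> g \<le> length cs"
  unfolding girth_def by (metis INF_lower enat_ord_simps(1) mem_Collect_eq)

lemma girth_le_relpowp_add_2:
  assumes "girth V E = enat g" "X \<subseteq> V" "c \<in> V" "c \<notin> X" "a \<noteq> b"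
    "{a, c} \<in> E" "{b, c} \<in> E" "(adj_in E X ^^ n) a b"
  shows "g \<le> n + 2"
proof -
  obtain n' where "n = Suc n'" using assms(5,8) by (cases n) auto
  then have "a \<in> X" using relpowp_Suc_D2[of n' "adj_in E X" a b] assms(8) by (auto simp: adj_in_def)
  then obtain ps where ps: "is_walk E X ps" "hd ps = a" "last ps = b" "length ps = Suc n"
    using is_walk_of_relpowp[OF assms(8)] by blast
  then obtain qs where qs: "is_walk E X qs" "distinct qs" "hd qs = a" "last qs = b"
    "length qs \<le> Suc n"
    using is_walk_distinct[OF ps(1)] by metis
  have "is_cycle V E (c # qs)"
    using is_cycle_Cons_path[OF qs(1,2) assms(2,3,4)] qs assms by auto
  with girth_le_length[OF assms(1)] qs(5) show ?thesis by fastforce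
qed

section \<open>Counting vertices by their distance\<close>

context
  fixes E :: "'a set set" and S :: "'a set" and x :: 'a
  assumes finite_S: "finite S" and x_in_S: "x \<in> S"
    and reachable_from_x: "\<And>w. w \<in> S \<Longrightarrow> (adj_in E S)\<^sup>*\<^sup>* x w"
begin

lemma card_dist_range_ge:
  assumes "z \<in> S" "hi \<le> dist_in E S x z"
  shows "Suc hi - lo \<le> card {w\<in>S. lo \<le> dist_in E S x w \<and> dist_in E S x w \<le> hi}"
proof -
  let ?D = "{w\<in>S. lo \<le> dist_in E S x w \<and> dist_in E S x w \<le> hi}"
  have "{lo..hi} \<subseteq> dist_in E S x ` ?D"
  proof
    fix k assume k: "k \<in> {lo..hi}"
    obtain w where w: "(adj_in E S)\<^sup>*\<^sup>* x w" "dist_in E S x w = k"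
      using dist_in_intermediate[OF reachable_from_x[OF assms(1)], of k] k assms(2) by auto
    then show "k \<in> dist_in E S x ` ?D"
      using rtranclp_adj_in_mem[OF w(1) x_in_S] k by force
  qed
  then have "card {lo..hi} \<le> card (dist_in E S x ` ?D)"
    by (intro card_mono) (auto simp: finite_S)
  also have "\<dots> \<le> card ?D" by (rule card_image_le) (simp add: finite_S)
  finally show ?thesis by simp
qed

lemma card_nbhd_ge:
  assumes "A \<subseteq> S" "x \<notin> A" "\<forall>a\<in>A. adj_in E S x a"
  shows "Suc (card A) \<le> card {w\<in>S. dist_in E S x w \<le> 1}"
proof -
  have "dist_in E S x a \<le> 1" if "a \<in> A" for a
    using assms(3) that by (blast intro: dist_in_le_1)
  then have "insert x A \<subseteq> {w\<in>S. dist_in E S x w \<le> 1}"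
    using assms(1) x_in_S by (auto simp: dist_in_self)
  then have "card (insert x A) \<le> card {w\<in>S. dist_in E S x w \<le> 1}"
    by (intro card_mono) (auto simp: finite_S)
  with assms(1,2) finite_S show ?thesis
    by (simp add: finite_subset)
qed

lemma card_nbhd_add_dist_le:
  assumes "A \<subseteq> S" "x \<notin> A" "\<forall>a\<in>A. adj_in E S x a" "z \<in> S"
  shows "card A + dist_in E S x z \<le> card S"
proof -
  let ?D1 = "{w\<in>S. dist_in E S x w \<le> 1}"
  let ?D2 = "{w\<in>S. 2 \<le> dist_in E S x w \<and> dist_in E S x w \<le> dist_in E S x z}"
  have "card ?D1 + card ?D2 = card (?D1 \<union> ?D2)"
    by (rule card_Un_disjoint[symmetric]) (auto simp: finite_S)
  also have "\<dots> \<le> card S" by (rule card_mono[OF finite_S]) auto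
  finally show ?thesis
    using card_nbhd_ge[OF assms(1-3)] card_dist_range_ge[OF assms(4) order_refl, of 2] by linarith
qed

text \<open>With \<open>j = dist x f\<close>, the sets \<open>insert x A\<close> and \<open>insert f B\<close> lie at distance at most 1 and
  at least \<open>j - 1\<close> from x, and each of the \<open>j - 3\<close> distances in between is attained.\<close>
lemma card_two_nbhds_add_dist_le:
  assumes "A \<subseteq> S" "x \<notin> A" "\<forall>a\<in>A. adj_in E S x a"
    and "f \<in> S" "B \<subseteq> S" "f \<notin> B" "\<forall>b\<in>B. adj_in E S b f"
    and "3 \<le> dist_in E S x f"
  shows "card A + card B + dist_in E S x f - 1 \<le> card S"
proof -
  let ?j = "dist_in E S x f"
  let ?D1 = "{w\<in>S. dist_in E S x w \<le> 1}"
  let ?D2 = "{w\<in>S. 2 \<le> dist_in E S x w \<and> dist_in E S x w \<le> ?j - 2}"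
  let ?D3 = "{w\<in>S. ?j - 1 \<le> dist_in E S x w}"
  have "?j \<le> Suc (dist_in E S x b)" if "b \<in> B" for b
    using dist_in_le_Suc[OF reachable_from_x] assms(5,7) that by blast
  then have "insert f B \<subseteq> ?D3"
    using assms(4,5) by fastforce
  then have "card (insert f B) \<le> card ?D3"
    by (intro card_mono) (auto simp: finite_S)
  with assms(5,6) finite_S have B: "Suc (card B) \<le> card ?D3"
    by (simp add: finite_subset)
  have "card ?D1 + card ?D2 = card (?D1 \<union> ?D2)"
    by (rule card_Un_disjoint[symmetric]) (auto simp: finite_S)
  moreover have "card (?D1 \<union> ?D2) + card ?D3 = card (?D1 \<union> ?D2 \<union> ?D3)"
    using assms(8) by (intro card_Un_disjoint[symmetric]) (auto simp: finite_S)
  ultimately have "card ?D1 + card ?D2 + card ?D3 = card (?D1 \<union> ?D2 \<union> ?D3)" by simp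
  also have "\<dots> \<le> card S" by (rule card_mono[OF finite_S]) auto
  finally show ?thesis
    using card_nbhd_ge[OF assms(1-3)] card_dist_range_ge[OF assms(4), of "?j - 2" 2] B assms(8)
    by linarith
qed

end

section \<open>Connected forcing sets\<close>

text \<open>A vertex farthest from r is not a cut vertex: a shortest walk to r never passes through a
  vertex farther from r than its start.\<close>
lemma rtranclp_adj_in_Diff_farthest:
  assumes reach: "\<And>a. a \<in> X \<Longrightarrow> (adj_in E X)\<^sup>*\<^sup>* a r"
    and farthest: "\<forall>a\<in>X. dist_in E X a r \<le> dist_in E X v r" and "u \<in> X - {v}"
  shows "(adj_in E (X - {v}))\<^sup>*\<^sup>* u r"
proof -
  have "(adj_in E (X - {v}))\<^sup>*\<^sup>* a r" if "a \<in> X - {v}" "dist_in E X a r = k" for a k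
    using that
  proof (induction k arbitrary: a)
    case 0
    then have "a = r" using dist_in_eq_0[OF reach] by blast
    then show ?case by simp
  next
    case (Suc k)
    then have "(adj_in E X ^^ Suc k) a r" using relpowp_dist_in[OF reach] by fastforce
    then obtain a' where a': "adj_in E X a a'" "(adj_in E X ^^ k) a' r"
      by (blast dest: relpowp_Suc_D2)
    have "a' \<in> X" using a'(1) by (simp add: adj_in_def)
    have "dist_in E X a r \<le> Suc (dist_in E X a' r)"
      using relpowp_Suc_I2[OF a'(1) relpowp_dist_in[OF reach[OF \<open>a' \<in> X\<close>]]] by (rule dist_in_le)
    then have "dist_in E X a' r = k" using dist_in_le[OF a'(2)] Suc.prems(2) by linarith
    moreover have "a' \<noteq> v"
    proof
      assume "a' = v"
      with farthest Suc.prems(1) \<open>dist_in E X a' r = k\<close> have "dist_in E X a r \<le> k" by blast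
      with Suc.prems(2) show False by simp
    qed
    ultimately have "(adj_in E (X - {v}))\<^sup>*\<^sup>* a' r" using Suc.IH[of a'] \<open>a' \<in> X\<close> by blast
    moreover have "adj_in E (X - {v}) a a'"
      using a'(1) \<open>a' \<noteq> v\<close> Suc.prems(1) by (simp add: adj_in_def)
    ultimately show ?case by (simp add: converse_rtranclp_into_rtranclp)
  qed
  with assms(3) show ?thesis by blast
qed

lemma connected_on_Diff_farthest:
  assumes conn: "connected_on E X" and "r \<in> X"
    and farthest: "\<forall>a\<in>X. dist_in E X a r \<le> dist_in E X v r" and "X - {v} \<noteq> {}"
  shows "connected_on E (X - {v})"
proof -
  have reach: "(adj_in E X)\<^sup>*\<^sup>* a r" if "a \<in> X" for a
    using conn that \<open>r \<in> X\<close> by (simp add: connected_on_adj_in)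
  have to_r: "(adj_in E (X - {v}))\<^sup>*\<^sup>* u r" if "u \<in> X - {v}" for u
    using rtranclp_adj_in_Diff_farthest[of X E r v u] reach farthest that by blast
  have "(adj_in E (X - {v}))\<^sup>*\<^sup>* a b" if "a \<in> X - {v}" "b \<in> X - {v}" for a b
    using rtranclp_trans[OF to_r[OF that(1)] sympD[OF symp_rtranclp[OF symp_adj_in] to_r[OF that(2)]]] .
  with assms(4) show ?thesis unfolding connected_on_adj_in by blast
qed

lemma connected_forcing_set_Diff_vertex:
  assumes "connected_on E (V - {v})" "u \<in> V - {v}" "v \<in> neighbors V E u"
  shows "connected_forcing_set V E (V - {v})"
proof -
  have "neighbors V E u - (V - {v}) = {v}" "insert v (V - {v}) = V"
    using assms(3) by (auto simp: neighbors_def)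
  then have "force_step V E (V - {v}) V"
    unfolding force_step_def using assms(2) by blast
  then show ?thesis
    using assms(1) unfolding connected_forcing_set_def forcing_set_def by blast
qed

lemma F_c_le_card: "connected_forcing_set V E S \<Longrightarrow> F_c V E \<le> card S"
  unfolding F_c_def by (rule Least_le) blast

lemma F_c_attained:
  assumes "connected_graph V E"
  obtains S where "connected_forcing_set V E S" "card S = F_c V E"
proof -
  have "connected_forcing_set V E V"
    using assms unfolding connected_forcing_set_def forcing_set_def connected_graph_def by simp
  then have "\<exists>k S. connected_forcing_set V E S \<and> card S = k" by blast
  from LeastI_ex[of "\<lambda>k. \<exists>S. connected_forcing_set V E S \<and> card S = k", OF this]
  show thesis using that unfolding F_c_def by blast
qed

section \<open>Graphs of given girth and minimum degree\<close>

locale girth_degree_graph =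
  fixes V :: "'a set" and E :: "'a set set" and g \<delta> :: nat
  assumes simple: "simple_graph V E" and girth: "girth V E = enat g" and girth_ge_3: "3 \<le> g"
    and degree_ge: "\<And>v. v \<in> V \<Longrightarrow> \<delta> \<le> degree V E v" and min_degree_ge_3: "3 \<le> \<delta>"
begin

abbreviation N :: "'a \<Rightarrow> 'a set" where "N \<equiv> neighbors V E"

lemma finite_V: "finite V"
  using simple by (simp add: simple_graph_def)

lemma edge_endpoints: "{u, v} \<in> E \<Longrightarrow> u \<in> V \<and> v \<in> V \<and> u \<noteq> v"
  using simple unfolding simple_graph_def by (metis doubleton_eq_iff)

lemma neighbors_subset: "N v \<subseteq> V"
  by (auto simp: neighbors_def)

lemma finite_neighbors: "finite (N v)"
  using finite_subset[OF neighbors_subset finite_V] .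

lemma in_neighbors_iff: "u \<in> N v \<longleftrightarrow> {u, v} \<in> E"
  using edge_endpoints by (auto simp: neighbors_def)

lemma in_neighbors_sym: "u \<in> N v \<longleftrightarrow> v \<in> N u"
  by (simp add: in_neighbors_iff insert_commute)

lemma not_in_neighbors_self: "v \<notin> N v"
  using edge_endpoints[of v v] by (auto simp: in_neighbors_iff)

lemma card_neighbors_ge: "v \<in> V \<Longrightarrow> \<delta> \<le> card (N v)"
  using degree_ge by (simp add: degree_def)

lemma card_neighbors_Diff_ge: "v \<in> V \<Longrightarrow> y \<in> N v \<Longrightarrow> \<delta> - 1 \<le> card (N v - {y})"
  using card_neighbors_ge[of v] by (simp add: finite_neighbors)

lemma adj_in_iff_neighbors: "adj_in E X a b \<longleftrightarrow> a \<in> X \<and> b \<in> X \<and> a \<in> N b"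
  by (auto simp: adj_in_def in_neighbors_iff insert_commute)

lemma girth_le_3:
  assumes "{a, b} \<in> E" "{b, c} \<in> E" "{c, a} \<in> E"
  shows "g \<le> 3"
proof -
  have "(adj_in E {a, b} ^^ 1) a b" using assms(1) by (simp only: relpowp_1) (simp add: adj_in_def)
  then show ?thesis
    using girth_le_relpowp_add_2[OF girth, of "{a, b}" c a b 1] assms edge_endpoints
    by (auto simp: insert_commute)
qed

lemma girth_le_4:
  assumes "{a, b} \<in> E" "{b, c} \<in> E" "{c, d} \<in> E" "{d, a} \<in> E" "a \<noteq> c" "b \<noteq> d"
  shows "g \<le> 4"
proof -
  have "(adj_in E {a, b, c} ^^ 2) a c"
    using assms(1,2) by (auto simp: adj_in_def numeral_2_eq_2 relpowp_Suc_I)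
  then show ?thesis
    using girth_le_relpowp_add_2[OF girth, of "{a, b, c}" d a c 2] assms edge_endpoints
    by (auto simp: insert_commute)
qed

context
  fixes S :: "'a set" and x y :: 'a
  assumes S_subset: "S \<subseteq> V" and S_connected: "connected_on E S"
    and x_in_S: "x \<in> S" and y_neighbor: "y \<in> N x" and y_notin_S: "y \<notin> S"
    and other_neighbors_in_S: "N x - {y} \<subseteq> S"
begin

lemma finite_S: "finite S"
  using finite_subset[OF S_subset finite_V] .

lemma reachable_in_S: "a \<in> S \<Longrightarrow> b \<in> S \<Longrightarrow> (adj_in E S)\<^sup>*\<^sup>* a b"
  using S_connected by (simp add: connected_on_adj_in)

lemma card_ge_delta_add_dist: "t \<in> S \<Longrightarrow> \<delta> - 1 + dist_in E S x t \<le> card S"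
  using card_nbhd_add_dist_le[OF finite_S x_in_S reachable_in_S[OF x_in_S],
      of "N x - {y}" t]
    card_neighbors_Diff_ge[OF _ y_neighbor] S_subset x_in_S other_neighbors_in_S
  by (fastforce simp: adj_in_iff_neighbors in_neighbors_sym not_in_neighbors_self)

lemma card_bound_if_girth_le: "t \<in> S \<Longrightarrow> g \<le> dist_in E S x t + 2 \<Longrightarrow> \<delta> + g - 3 \<le> card S"
  using card_ge_delta_add_dist[of t] min_degree_ge_3 girth_ge_3 by linarith

lemma card_bound_colored_neighbor_in_S:
  assumes "z \<in> S" "z \<in> N y" "z \<noteq> x"
  shows "\<delta> + g - 3 \<le> card S"
proof (rule card_bound_if_girth_le[OF assms(1)])
  show "g \<le> dist_in E S x z + 2"
    using girth_le_relpowp_add_2[OF girth S_subset _ y_notin_S assms(3)[symmetric]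
        _ _ relpowp_dist_in[OF reachable_in_S[OF x_in_S assms(1)]]]
      y_neighbor assms(2) neighbors_subset[of x]
    by (auto simp: in_neighbors_iff insert_commute)
qed

context
  fixes f z :: 'a
  assumes f_in_S: "f \<in> S" and z_neighbor_f: "z \<in> N f" and z_notin_S: "z \<notin> S"
    and f_other_neighbors_in_S: "N f - {z} \<subseteq> S" and z_neighbor_y: "z \<in> N y"
begin

lemma f_ne_x: "f \<noteq> x"
  using y_neighbor y_notin_S z_neighbor_y f_other_neighbors_in_S not_in_neighbors_self by blast

lemma card_f_neighbors_ge: "\<delta> - 1 \<le> card (N f - {z})"
  using card_neighbors_Diff_ge[OF _ z_neighbor_f] f_in_S S_subset by blast

lemma two_f_neighbors:
  obtains q q' where "q \<in> N f - {z}" "q' \<in> N f - {z}" "q \<noteq> q'"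
  using card_f_neighbors_ge min_degree_ge_3 card_le_Suc0_iff_eq[of "N f - {z}"]
  by (force simp: finite_neighbors)

lemma card_bound_far:
  assumes "3 \<le> dist_in E S x f"
  shows "\<delta> + dist_in E S x f \<le> card S"
proof -
  have "card (N x - {y}) + card (N f - {z}) + dist_in E S x f - 1 \<le> card S"
    using card_two_nbhds_add_dist_le[OF finite_S x_in_S reachable_in_S[OF x_in_S],
        of "N x - {y}" f "N f - {z}"]
      assms f_in_S other_neighbors_in_S f_other_neighbors_in_S x_in_S
    by (force simp: adj_in_iff_neighbors in_neighbors_sym not_in_neighbors_self)
  then show ?thesis
    using card_neighbors_Diff_ge[OF _ y_neighbor] card_f_neighbors_ge x_in_S S_subset
      min_degree_ge_3 assms
    by force
qed

lemma card_bound_adjacent: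
  assumes "dist_in E S x f = 1" "4 \<le> g"
  shows "\<delta> + 1 \<le> card S"
proof -
  have "adj_in E S x f"
    using dist_in_le_1_cases[OF reachable_in_S[OF x_in_S f_in_S]] assms(1) f_ne_x by simp
  then have f_x: "f \<in> N x" by (simp add: adj_in_iff_neighbors in_neighbors_sym)
  obtain q where q: "q \<in> N f - {z}" "q \<noteq> x"
    using two_f_neighbors by metis
  \<comment> \<open>q adjacent to x would close the triangle x f q\<close>
  have "q \<notin> N x"
    using girth_le_3[of x f q] f_x q assms(2) by (auto simp: in_neighbors_iff insert_commute)
  have "\<delta> + 1 \<le> card (N x - {y}) + 2"
    using card_neighbors_Diff_ge[OF _ y_neighbor] x_in_S S_subset min_degree_ge_3 by force
  also have "\<dots> = card (insert q (insert x (N x - {y})))"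
    using \<open>q \<notin> N x\<close> q(2) by (simp add: finite_neighbors not_in_neighbors_self)
  also have "\<dots> \<le> card S"
    using q f_other_neighbors_in_S x_in_S other_neighbors_in_S by (intro card_mono[OF finite_S]) blast
  finally show ?thesis .
qed

lemma card_bound_dist_2:
  assumes "dist_in E S x f = 2" "5 \<le> g"
  shows "\<delta> + 2 \<le> card S"
proof -
  have f_x: "f \<notin> N x"
    using dist_in_le_1[of E S x f] assms(1) x_in_S f_in_S
    by (auto simp: adj_in_iff_neighbors in_neighbors_sym)
  obtain q where q: "q \<in> N f - {z}" "q \<notin> N x"
  proof -
    obtain q q' where qq': "q \<in> N f - {z}" "q' \<in> N f - {z}" "q \<noteq> q'"
      using two_f_neighbors by metis
    \<comment> \<open>two common neighbours of x and f would close the 4-cycle x q f q'\<close>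
    have "\<not> (q \<in> N x \<and> q' \<in> N x)"
      using girth_le_4[of x q f q'] qq' f_ne_x assms(2)
      by (auto simp: in_neighbors_iff insert_commute)
    with qq' that show thesis by blast
  qed
  have "q \<noteq> x" "q \<noteq> f"
    using q f_x not_in_neighbors_self in_neighbors_sym by blast+
  have "\<delta> + 2 \<le> card (N x - {y}) + 3"
    using card_neighbors_Diff_ge[OF _ y_neighbor] x_in_S S_subset min_degree_ge_3 by force
  also have "\<dots> = card (insert q (insert f (insert x (N x - {y}))))"
    using q(2) f_x f_ne_x \<open>q \<noteq> x\<close> \<open>q \<noteq> f\<close>
    by (simp add: finite_neighbors not_in_neighbors_self)
  also have "\<dots> \<le> card S"
    using q f_in_S f_other_neighbors_in_S x_in_S other_neighbors_in_S
    by (intro card_mono[OF finite_S]) blast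
  finally show ?thesis .
qed

lemma girth_le_dist_add_3: "g \<le> dist_in E S x f + 3"
proof -
  have "(adj_in E (insert z S) ^^ dist_in E S x f) x f"
    using adj_in_mono[OF _ relpowp_dist_in[OF reachable_in_S[OF x_in_S f_in_S]]] by blast
  moreover have "adj_in E (insert z S) f z"
    using z_neighbor_f f_in_S by (simp add: adj_in_iff_neighbors in_neighbors_sym)
  ultimately have walk: "(adj_in E (insert z S) ^^ Suc (dist_in E S x f)) x z"
    by (rule relpowp_Suc_I)
  have y: "y \<notin> insert z S" and "x \<noteq> z"
    using z_neighbor_y not_in_neighbors_self y_notin_S x_in_S z_notin_S by auto
  have "insert z S \<subseteq> V" "y \<in> V" "{x, y} \<in> E" "{z, y} \<in> E"
    using S_subset y_neighbor z_neighbor_y z_neighbor_f neighbors_subset[of f]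
      neighbors_subset[of x]
    by (auto simp: in_neighbors_iff insert_commute)
  from girth_le_relpowp_add_2[OF girth this(1,2) y \<open>x \<noteq> z\<close> this(3,4) walk]
  show ?thesis by simp
qed

lemma card_bound_colored_neighbor_forced: "\<delta> + g - 3 \<le> card S"
proof (cases "g \<le> dist_in E S x f + 2")
  case True
  then show ?thesis by (rule card_bound_if_girth_le[OF f_in_S])
next
  case False
  with girth_le_dist_add_3 have g: "g = dist_in E S x f + 3" by linarith
  have "dist_in E S x f \<noteq> 0"
    using dist_in_eq_0[OF reachable_in_S[OF x_in_S f_in_S]] f_ne_x by blast
  then have "dist_in E S x f = 1 \<or> dist_in E S x f = 2 \<or> 3 \<le> dist_in E S x f" by linarith
  then show ?thesis
    using card_bound_adjacent card_bound_dist_2 card_bound_far g by (elim disjE) force+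
qed

end

end

definition pendant_extension :: "'a set \<Rightarrow> 'a set \<Rightarrow> bool" where
  "pendant_extension S C \<longleftrightarrow> S \<subseteq> C \<and> C \<subseteq> V \<and>
     (\<forall>v\<in>C - S. \<exists>f\<in>S. N v \<inter> C = {f} \<and> N f \<inter> (C - S) = {v} \<and> N f \<subseteq> C)"

lemma pendant_extension_neighbors_subset:
  assumes "pendant_extension S C" "v \<in> C - S" "u \<in> C" "u \<in> N v"
  shows "N u \<subseteq> C"
proof -
  obtain f where "N v \<inter> C = {f}" "N f \<subseteq> C"
    using assms(1,2) unfolding pendant_extension_def by blast
  moreover have "u \<in> N v \<inter> C" using assms(3,4) by blast
  ultimately show ?thesis by simp
qed

lemma pendant_extension_forcer:
  assumes ext: "pendant_extension S C" and "u \<in> C" and Nu: "N u - C = {w}"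
  shows "u \<in> S" and "N u - {w} \<subseteq> S"
proof -
  have "w \<in> N u" "w \<notin> C" using Nu by auto
  show "u \<in> S"
  proof (rule ccontr)
    assume "u \<notin> S"
    then obtain f where "N u \<inter> C = {f}"
      using ext \<open>u \<in> C\<close> unfolding pendant_extension_def by blast
    then have "N u = {f, w}" using Nu by blast
    then have "card (N u) \<le> 2" by (simp add: card_insert_le_m1)
    moreover have "u \<in> V" using ext \<open>u \<in> C\<close> by (auto simp: pendant_extension_def)
    ultimately show False using card_neighbors_ge min_degree_ge_3 by fastforce
  qed
  show "N u - {w} \<subseteq> S"
  proof
    fix v assume v: "v \<in> N u - {w}"
    then have "v \<in> C" using Nu by blast
    show "v \<in> S"
    proof (rule ccontr)
      assume "v \<notin> S"
      then have "N u \<subseteq> C"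
        using pendant_extension_neighbors_subset[OF ext _ \<open>u \<in> C\<close>] \<open>v \<in> C\<close> v in_neighbors_sym
        by blast
      with \<open>w \<in> N u\<close> \<open>w \<notin> C\<close> show False by blast
    qed
  qed
qed

lemma pendant_extension_attached:
  assumes ext: "pendant_extension S C" and "z \<in> C - S"
  obtains f where "f \<in> S" "z \<in> N f" "N f - {z} \<subseteq> S"
proof -
  obtain f where f: "f \<in> S" "N f \<inter> (C - S) = {z}" "N f \<subseteq> C"
    using assms unfolding pendant_extension_def by blast
  then have "z \<in> N f" "N f - {z} \<subseteq> S" by blast+
  with f(1) that show thesis by blast
qed

lemma pendant_extension_insert:
  assumes ext: "pendant_extension S C" and "u \<in> S" and Nu: "N u - C = {w}"
    and Nw: "N w \<inter> C = {u}"
  shows "pendant_extension S (insert w C)"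
  unfolding pendant_extension_def
proof (intro conjI ballI)
  have SC: "S \<subseteq> C" using ext by (simp add: pendant_extension_def)
  have w: "w \<in> N u" "w \<notin> C" using Nu by auto
  show "S \<subseteq> insert w C" "insert w C \<subseteq> V"
    using ext w(1) neighbors_subset by (auto simp: pendant_extension_def)
  fix v assume v: "v \<in> insert w C - S"
  show "\<exists>f\<in>S. N v \<inter> insert w C = {f} \<and> N f \<inter> (insert w C - S) = {v} \<and> N f \<subseteq> insert w C"
  proof (cases "v = w")
    case True
    have "v' \<notin> C - S" if "v' \<in> N u" for v'
    proof
      assume "v' \<in> C - S"
      with that have "N u \<subseteq> C"
        using pendant_extension_neighbors_subset[OF ext] \<open>u \<in> S\<close> SC in_neighbors_sym by blast
      with w show False by blast
    qed
    then have "N u \<inter> (insert w C - S) = {w}" using w SC by blast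
    moreover have "N w \<inter> insert w C = {u}" using Nw not_in_neighbors_self[of w] by blast
    moreover have "N u \<subseteq> insert w C" using Nu by blast
    ultimately show ?thesis using True \<open>u \<in> S\<close> by blast
  next
    case False
    with v have v: "v \<in> C - S" by blast
    then obtain f where f: "f \<in> S" "N v \<inter> C = {f}" "N f \<inter> (C - S) = {v}" "N f \<subseteq> C"
      using ext unfolding pendant_extension_def by blast
    have "w \<notin> N v"
    proof
      assume "w \<in> N v"
      then have "v \<in> N w \<inter> C" using v in_neighbors_sym by blast
      with Nw \<open>u \<in> S\<close> v show False by auto
    qed
    moreover have "w \<notin> N f" using f(4) w(2) by blast
    ultimately show ?thesis using f by blast
  qed
qed

lemma pendant_extension_force_step:
  assumes S: "S \<subseteq> V" "connected_on E S" and ext: "pendant_extension S C"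
    and step: "force_step V E C C'"
  shows "\<delta> + g - 3 \<le> card S \<or> pendant_extension S C'"
proof -
  obtain u w where u: "u \<in> C" and Nu: "N u - C = {w}" and C': "C' = insert w C"
    using step unfolding force_step_def by blast
  have w: "w \<in> N u" "w \<notin> S" using Nu ext by (auto simp: pendant_extension_def)
  have u_S: "u \<in> S" and Nu_S: "N u - {w} \<subseteq> S"
    using pendant_extension_forcer[OF ext u Nu] by blast+
  note bound = S u_S w(1) w(2) Nu_S
  show ?thesis
  proof (cases "\<exists>z\<in>C. z \<in> N w \<and> z \<noteq> u")
    case True
    then obtain z where z: "z \<in> C" "z \<in> N w" "z \<noteq> u" by blast
    show ?thesis
    proof (cases "z \<in> S")
      case True
      then show ?thesis using card_bound_colored_neighbor_in_S[OF bound True z(2,3)] by blast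
    next
      case False
      with z(1) obtain f where "f \<in> S" "z \<in> N f" "N f - {z} \<subseteq> S"
        using pendant_extension_attached[OF ext] by blast
      then show ?thesis
        using card_bound_colored_neighbor_forced[OF bound _ _ False _ z(2)] by blast
    qed
  next
    case False
    then have "N w \<inter> C = {u}" using w(1) u in_neighbors_sym by blast
    then show ?thesis using pendant_extension_insert[OF ext u_S Nu] C' by blast
  qed
qed

lemma pendant_extension_rtranclp_force_step:
  assumes S: "S \<subseteq> V" "connected_on E S" and "(force_step V E)\<^sup>*\<^sup>* S C"
  shows "\<delta> + g - 3 \<le> card S \<or> pendant_extension S C"
  using assms(3)
proof (induction rule: rtranclp_induct)
  case base
  then show ?case using S(1) by (simp add: pendant_extension_def)
next
  case (step C C')
  then show ?case using pendant_extension_force_step[OF S] by blast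
qed

lemma not_pendant_extension_proper: "S \<noteq> V \<Longrightarrow> \<not> pendant_extension S V"
proof
  assume "S \<noteq> V" "pendant_extension S V"
  then obtain v f where "v \<in> V" "N v \<inter> V = {f}" unfolding pendant_extension_def by blast
  then show False
    using card_neighbors_ge[of v] neighbors_subset[of v] min_degree_ge_3
    by (simp add: Int_absorb2)
qed

lemma card_bound_proper_connected_forcing_set:
  assumes "connected_forcing_set V E S" "S \<noteq> V"
  shows "\<delta> + g - 3 \<le> card S"
  using pendant_extension_rtranclp_force_step[of S V] not_pendant_extension_proper assms
  unfolding connected_forcing_set_def forcing_set_def by blast

lemma exists_connected_forcing_set_Diff:
  assumes "connected_graph V E"
  obtains v where "v \<in> V" "connected_forcing_set V E (V - {v})"
proof -
  have conn: "connected_on E V" using assms by (simp add: connected_graph_def)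
  then obtain r where "r \<in> V" by (auto simp: connected_on_def)
  let ?d = "\<lambda>a. dist_in E V a r"
  have "Max (?d ` V) \<in> ?d ` V"
    using finite_V \<open>r \<in> V\<close> by (intro Max_in) auto
  then obtain v where v: "v \<in> V" "Max (?d ` V) = ?d v"
    by blast
  have farthest: "\<forall>a\<in>V. ?d a \<le> ?d v"
    using finite_V v(2) by (auto intro!: Max_ge simp flip: v(2))
  have "card (N v) \<noteq> 0" using card_neighbors_ge[OF v(1)] min_degree_ge_3 by linarith
  then obtain u where "u \<in> N v" by fastforce
  then have u: "u \<in> V - {v}" "v \<in> N u"
    using neighbors_subset[of v] not_in_neighbors_self[of v] in_neighbors_sym by blast+
  then have "connected_on E (V - {v})"
    using connected_on_Diff_farthest[OF conn \<open>r \<in> V\<close> farthest] by blast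
  from v(1) connected_forcing_set_Diff_vertex[OF this u] show thesis by (rule that)
qed

lemma card_bound_connected_forcing_set:
  assumes "connected_graph V E" "connected_forcing_set V E S"
  shows "\<delta> + g - 3 \<le> card S"
proof (cases "S = V")
  case True
  obtain v where "v \<in> V" "connected_forcing_set V E (V - {v})"
    using exists_connected_forcing_set_Diff[OF assms(1)] .
  then have "\<delta> + g - 3 \<le> card (V - {v})"
    using card_bound_proper_connected_forcing_set by blast
  also have "\<dots> \<le> card S" using True finite_V by (simp add: card_mono)
  finally show ?thesis .
qed (use assms(2) card_bound_proper_connected_forcing_set in blast)

lemma F_c_ge: "connected_graph V E \<Longrightarrow> \<delta> + g - 3 \<le> F_c V E"
  using F_c_attained card_bound_connected_forcing_set by metis

end

lemma min_degree_le_degree: "simple_graph V E \<Longrightarrow> v \<in> V \<Longrightarrow> min_degree V E \<le> degree V E v"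
  unfolding min_degree_def simple_graph_def by simp

lemma F_c_ge_min_degree_add_girth:
  assumes "simple_graph V E" "connected_graph V E" "girth V E = enat g" "3 \<le> g"
    "3 \<le> min_degree V E"
  shows "min_degree V E + g - 3 \<le> F_c V E"
proof -
  interpret girth_degree_graph V E g "min_degree V E"
    using assms min_degree_le_degree by unfold_locales auto
  show ?thesis using F_c_ge[OF assms(2)] .
qed

section \<open>Complete graphs\<close>

definition complete_edges :: "'a set \<Rightarrow> 'a set set" where
  "complete_edges A = {{a, b} | a b. a \<in> A \<and> b \<in> A \<and> a \<noteq> b}"

lemma doubleton_in_complete_edges_iff:
  "{u, v} \<in> complete_edges A \<longleftrightarrow> u \<in> A \<and> v \<in> A \<and> u \<noteq> v"
  unfolding complete_edges_def by (auto simp: doubleton_eq_iff)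

lemma simple_graph_complete: "finite A \<Longrightarrow> simple_graph A (complete_edges A)"
  unfolding simple_graph_def complete_edges_def by blast

lemma neighbors_complete: "v \<in> A \<Longrightarrow> neighbors A (complete_edges A) v = A - {v}"
  unfolding neighbors_def by (auto simp: doubleton_in_complete_edges_iff)

lemma min_degree_complete:
  assumes "finite A" "A \<noteq> {}"
  shows "min_degree A (complete_edges A) = card A - 1"
proof -
  have "degree A (complete_edges A) ` A = {card A - 1}"
    using assms by (auto simp: degree_def neighbors_complete)
  then show ?thesis by (simp add: min_degree_def)
qed

lemma connected_on_complete:
  assumes "S \<subseteq> A" "S \<noteq> {}"
  shows "connected_on (complete_edges A) S"
proof -
  have "adj_in (complete_edges A) S a b" if "a \<in> S" "b \<in> S" "a \<noteq> b" for a b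
    using that assms(1) by (auto simp: adj_in_def doubleton_in_complete_edges_iff)
  then show ?thesis
    using assms(2) unfolding connected_on_adj_in by (metis r_into_rtranclp rtranclp.rtrancl_refl)
qed

lemma girth_complete:
  assumes "finite A" "3 \<le> card A"
  shows "girth A (complete_edges A) = enat 3"
proof -
  obtain T where "T \<subseteq> A" "card T = 3" "finite T"
    by (rule obtain_subset_with_card_n[OF assms(2)])
  then obtain a b c where abc: "a \<in> A" "b \<in> A" "c \<in> A" "a \<noteq> b" "b \<noteq> c" "a \<noteq> c"
    by (auto simp: card_3_iff)
  have "{[a, b, c] ! i, [a, b, c] ! ((i + 1) mod 3)} \<in> complete_edges A" if "i < 3" for i
  proof -
    have "i = 0 \<or> i = 1 \<or> i = 2" using that by linarith
    then show ?thesis using abc by (auto simp: doubleton_in_complete_edges_iff)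
  qed
  then have "is_cycle A (complete_edges A) [a, b, c]"
    using abc unfolding is_cycle_def by simp
  then have "girth A (complete_edges A) \<le> enat (length [a, b, c])"
    unfolding girth_def by (rule INF_lower[OF CollectI])
  moreover have "enat 3 \<le> girth A (complete_edges A)"
    unfolding girth_def is_cycle_def by (rule INF_greatest) simp
  ultimately show ?thesis by (simp add: numeral_3_eq_3)
qed

lemma connected_graph_complete: "A \<noteq> {} \<Longrightarrow> connected_graph A (complete_edges A)"
  unfolding connected_graph_def by (rule connected_on_complete) auto

lemma F_c_complete:
  assumes "finite A" "4 \<le> card A"
  shows "F_c A (complete_edges A) = card A - 1"
proof (rule antisym)
  obtain v where "v \<in> A" using assms(2) by fastforce
  moreover have "card (A - {v}) \<noteq> 0"
    using assms(2) card_Diff_singleton[OF \<open>v \<in> A\<close>] by simp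
  then have "A - {v} \<noteq> {}" by force
  then obtain u where "u \<in> A - {v}" by blast
  ultimately have "connected_forcing_set A (complete_edges A) (A - {v})"
    using connected_forcing_set_Diff_vertex[OF connected_on_complete[of "A - {v}" A]]
      neighbors_complete[of u A]
    by blast
  from F_c_le_card[OF this] show "F_c A (complete_edges A) \<le> card A - 1"
    using \<open>v \<in> A\<close> assms(1) by simp
next
  have "A \<noteq> {}" using assms(2) by auto
  then show "card A - 1 \<le> F_c A (complete_edges A)"
    using F_c_ge_min_degree_add_girth[of A "complete_edges A" 3] assms
    by (simp add: simple_graph_complete connected_graph_complete
        girth_complete min_degree_complete)
qed

lemma complete_graph_attains_bound:
  fixes d :: nat
  assumes "3 \<le> d"
  defines "A \<equiv> {0..d}"
  shows "simple_graph A (complete_edges A) \<and> connected_graph A (complete_edges A)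
    \<and> girth A (complete_edges A) = enat 3 \<and> min_degree A (complete_edges A) = d
    \<and> F_c A (complete_edges A) = d"
proof -
  have A: "finite A" "A \<noteq> {}" "card A = Suc d" unfolding A_def by auto
  with assms(1) have "3 \<le> card A" "4 \<le> card A" by simp_all
  with A show ?thesis
    using simple_graph_complete[OF A(1)] connected_graph_complete[OF A(2)]
      girth_complete[OF A(1)] min_degree_complete[OF A(1,2)] F_c_complete[OF A(1)]
    by simp
qed

theorem theorem6:
  fixes V :: "'a set" and E :: "'a set set" and g \<delta> :: nat
  assumes "simple_graph V E" and "connected_graph V E"
    and "girth V E = enat g" and "g \<ge> 3"
    and "min_degree V E = \<delta>" and "\<delta> \<ge> 3"
  shows "F_c V E \<ge> \<delta> + g - 3
    \<and> (\<forall>d \<ge> 3. \<exists>(V' :: nat set) (E' :: nat set set) g'.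
          simple_graph V' E' \<and> connected_graph V' E' \<and> girth V' E' = enat g' \<and> g' \<ge> 3
          \<and> min_degree V' E' = d \<and> F_c V' E' = d + g' - 3)"
proof (intro conjI allI impI)
  show "\<delta> + g - 3 \<le> F_c V E"
    using F_c_ge_min_degree_add_girth[OF assms(1-4)] assms(5,6) by simp
next
  fix d :: nat assume "3 \<le> d"
  then show "\<exists>(V' :: nat set) (E' :: nat set set) g'.
      simple_graph V' E' \<and> connected_graph V' E' \<and> girth V' E' = enat g' \<and> g' \<ge> 3
      \<and> min_degree V' E' = d \<and> F_c V' E' = d + g' - 3"
    using complete_graph_attains_bound[of d]
    by (intro exI[of _ "{0..d}"] exI[of _ "complete_edges {0..d}"] exI[of _ 3]) simp
qed

end
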